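(* Let $r_1,r_2>0$ and let $\gamma_1,\gamma_2$ be two disjoint geodesics in $\mathbb{H}^2$, and let $\gamma$ be the set of points $q\in\mathbb{H}^2$ with $r_1\sinh d(q,\gamma_1)=r_2\sinh d(q,\gamma_2)$ (this set is a geodesic). Suppose $\mathbb{H}^2$ is isometrically identified with the Poincaré unit disk $\mathbb{D}$ so that $\gamma$ is a diameter of $\mathbb{D}$. Then the Euclidean circles containing $\gamma_1$ and $\gamma_2$ have radii in ratio $r_1:r_2$, and the inversive distance between these two Euclidean circles equals $\cosh d_{\mathbb{H}}(\gamma_1,\gamma_2)$.
   Context: The inversive distance of two Euclidean circles with radii $\rho_1,\rho_2$ whose centers are at distance $l$ is $(l^2-\rho_1^2-\rho_2^2)/(2\rho_1\rho_2)$. *)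

theory Defs
  imports "HOL-Analysis.Analysis"
begin

definition pdisk :: "complex set" where
  "pdisk = ball 0 1"

definition hdist :: "complex \<Rightarrow> complex \<Rightarrow> real" where
  "hdist z w = arcosh (1 + 2 * (cmod (z - w))\<^sup>2 / ((1 - (cmod z)\<^sup>2) * (1 - (cmod w)\<^sup>2)))"

definition hgeodesic :: "complex set \<Rightarrow> bool" where
  "hgeodesic G \<longleftrightarrow> (\<exists>f :: real \<Rightarrow> complex.
      (\<forall>t. f t \<in> pdisk) \<and> (\<forall>s t. hdist (f s) (f t) = \<bar>s - t\<bar>) \<and> G = range f)"

definition hdist_set :: "complex \<Rightarrow> complex set \<Rightarrow> real" where
  "hdist_set q S = Inf {hdist q p | p. p \<in> S}"

definition hdist_sets :: "complex set \<Rightarrow> complex set \<Rightarrow> real" where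
  "hdist_sets S T = Inf {hdist p q | p q. p \<in> S \<and> q \<in> T}"

definition inversive_distance :: "complex \<Rightarrow> real \<Rightarrow> complex \<Rightarrow> real \<Rightarrow> real" where
  "inversive_distance c1 \<rho>1 c2 \<rho>2 = ((cmod (c1 - c2))\<^sup>2 - \<rho>1\<^sup>2 - \<rho>2\<^sup>2) / (2 * \<rho>1 * \<rho>2)"

definition diameter_of_disk :: "complex set \<Rightarrow> bool" where
  "diameter_of_disk G \<longleftrightarrow> (\<exists>u. cmod u = 1 \<and> G = {complex_of_real t * u | t. \<bar>t\<bar> < 1})"

end

theory Submission
  imports Defs
begin

text \<open>
  Moebius automorphisms of the disk show that every complete geodesic is the trace in the disk of
  a circle or line \<open>A |z|\<^sup>2 - 2 Re (conj c z) + A = 0\<close> with \<open>A\<^sup>2 < |c|\<^sup>2\<close>, and that the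
  distance from \<open>q\<close> to it satisfies
  \<open>sinh d = |A |q|\<^sup>2 - 2 Re (conj c q) + A| / ((1 - |q|\<^sup>2) sqrt (|c|\<^sup>2 - A\<^sup>2))\<close>.
  The locus is a diameter, so it contains 0; as the geodesics are disjoint, neither passes
  through 0, and both are circles \<open>|z - c\<^sub>i| = \<rho>\<^sub>i\<close> with \<open>\<rho>\<^sub>i\<^sup>2 = |c\<^sub>i|\<^sup>2 - 1\<close>. After a
  rotation the locus is the real diameter. At 0 the locus condition gives
  \<open>r\<^sub>1 / \<rho>\<^sub>1 = r\<^sub>2 / \<rho>\<^sub>2\<close>; along the diameter it forces \<open>Re c\<^sub>1 = Re c\<^sub>2 = a\<close>, disjointness
  forces \<open>|a| \<le> 1\<close>, and the lines lie on opposite sides of the diameter. The distance between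
  them is then \<open>arsinh (sqrt (1 - a\<^sup>2) |Im c\<^sub>1 - Im c\<^sub>2| / (\<rho>\<^sub>1 \<rho>\<^sub>2))\<close>, realised through
  the point \<open>a / (1 + sqrt (1 - a\<^sup>2))\<close> of the diameter when \<open>|a| < 1\<close>, and its \<open>cosh\<close> is
  \<open>(1 - a\<^sup>2 - Im c\<^sub>1 Im c\<^sub>2) / (\<rho>\<^sub>1 \<rho>\<^sub>2)\<close>, the inversive distance of the two circles.
\<close>

section \<open>Moebius automorphisms of the disk and the hyperbolic distance\<close>

lemma norm_lt_1_imp_sq_lt_1: "cmod z < 1 \<Longrightarrow> (cmod z)\<^sup>2 < 1"
  by (simp add: abs_square_less_1)

definition disk_moebius :: "complex \<Rightarrow> complex \<Rightarrow> complex" where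
  "disk_moebius a z = (z - a) / (1 - cnj a * z)"

lemma disk_moebius_self [simp]: "disk_moebius a a = 0"
  by (simp add: disk_moebius_def)

lemma disk_moebius_denom_nonzero:
  assumes "cmod a < 1" "cmod z < 1"
  shows "1 - cnj a * z \<noteq> 0"
proof
  assume "1 - cnj a * z = 0"
  then have "cmod a * cmod z = 1"
    by (metis complex_mod_cnj norm_mult norm_one right_minus_eq)
  moreover have "cmod a * cmod z < 1"
    using assms mult_strict_mono[of "cmod a" 1 "cmod z" 1] by simp
  ultimately show False by simp
qed

lemma norm_one_minus_cnj_mult_sq:
  "(cmod (1 - cnj a * z))\<^sup>2 - (cmod (z - a))\<^sup>2 = (1 - (cmod a)\<^sup>2) * (1 - (cmod z)\<^sup>2)"
  unfolding cmod_power2 by (simp add: power2_eq_square algebra_simps)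

lemma one_minus_norm_disk_moebius_sq:
  assumes "cmod a < 1" "cmod z < 1"
  shows "1 - (cmod (disk_moebius a z))\<^sup>2
           = (1 - (cmod a)\<^sup>2) * (1 - (cmod z)\<^sup>2) / (cmod (1 - cnj a * z))\<^sup>2"
  using disk_moebius_denom_nonzero[OF assms] norm_one_minus_cnj_mult_sq[of a z]
  by (simp add: disk_moebius_def norm_divide power_divide field_simps)

lemma norm_disk_moebius_less_1:
  assumes "cmod a < 1" "cmod z < 1"
  shows "cmod (disk_moebius a z) < 1"
proof -
  have "0 < (1 - (cmod a)\<^sup>2) * (1 - (cmod z)\<^sup>2) / (cmod (1 - cnj a * z))\<^sup>2"
    using assms disk_moebius_denom_nonzero[OF assms] norm_lt_1_imp_sq_lt_1 by simp
  then have "(cmod (disk_moebius a z))\<^sup>2 < 1"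
    using one_minus_norm_disk_moebius_sq[OF assms] by linarith
  then show ?thesis
    by (simp add: abs_square_less_1)
qed

lemma norm_diff_disk_moebius:
  assumes "cmod a < 1" "cmod z < 1" "cmod w < 1"
  shows "cmod (disk_moebius a z - disk_moebius a w)
           = (1 - (cmod a)\<^sup>2) * cmod (z - w) / (cmod (1 - cnj a * z) * cmod (1 - cnj a * w))"
proof -
  have "disk_moebius a z - disk_moebius a w
          = (1 - a * cnj a) * (z - w) / ((1 - cnj a * z) * (1 - cnj a * w))"
    using disk_moebius_denom_nonzero assms
    by (simp add: disk_moebius_def divide_simps) (simp add: algebra_simps)
  also have "1 - a * cnj a = of_real (1 - (cmod a)\<^sup>2)"
    by (simp only: of_real_diff of_real_1 complex_norm_square)
  finally have "cmod (disk_moebius a z - disk_moebius a w)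
      = \<bar>1 - (cmod a)\<^sup>2\<bar> * cmod (z - w) / (cmod (1 - cnj a * z) * cmod (1 - cnj a * w))"
    by (simp only: norm_mult norm_divide norm_of_real)
  moreover have "(cmod a)\<^sup>2 < 1"
    using assms(1) by (rule norm_lt_1_imp_sq_lt_1)
  ultimately show ?thesis
    by simp
qed

lemma disk_moebius_inverse:
  assumes "cmod a < 1" "cmod z < 1"
  shows "disk_moebius (-a) (disk_moebius a z) = z"
proof -
  have "1 - a * cnj a \<noteq> 0"
    using disk_moebius_denom_nonzero[OF assms(1,1)] by (simp add: mult.commute)
  then show ?thesis
    using disk_moebius_denom_nonzero[OF assms]
    by (simp add: disk_moebius_def divide_simps) (simp add: algebra_simps)
qed

lemma cosh_hdist:
  assumes "cmod z < 1" "cmod w < 1"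
  shows "cosh (hdist z w) = 1 + 2 * (cmod (z - w))\<^sup>2 / ((1 - (cmod z)\<^sup>2) * (1 - (cmod w)\<^sup>2))"
proof -
  have "0 < (1 - (cmod z)\<^sup>2) * (1 - (cmod w)\<^sup>2)"
    using assms norm_lt_1_imp_sq_lt_1 by simp
  then show ?thesis by (simp add: hdist_def)
qed

lemma hdist_nonneg:
  assumes "cmod z < 1" "cmod w < 1"
  shows "0 \<le> hdist z w"
proof -
  have "0 < (1 - (cmod z)\<^sup>2) * (1 - (cmod w)\<^sup>2)"
    using assms norm_lt_1_imp_sq_lt_1 by simp
  then show ?thesis by (simp add: hdist_def)
qed

lemma hdist_commute: "hdist z w = hdist w z"
  unfolding hdist_def by (simp add: norm_minus_commute mult.commute)

lemma hdist_self [simp]: "hdist z z = 0"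
  by (simp add: hdist_def)

lemma hdist_disk_moebius:
  assumes "cmod a < 1" "cmod z < 1" "cmod w < 1"
  shows "hdist (disk_moebius a z) (disk_moebius a w) = hdist z w"
proof -
  define A Z W where "A = 1 - (cmod a)\<^sup>2" and "Z = 1 - (cmod z)\<^sup>2" and "W = 1 - (cmod w)\<^sup>2"
  define P Q where "P = cmod (1 - cnj a * z)" and "Q = cmod (1 - cnj a * w)"
  have "A \<noteq> 0" "Z \<noteq> 0" "W \<noteq> 0"
    using assms norm_lt_1_imp_sq_lt_1 unfolding A_def Z_def W_def by (metis less_irrefl right_minus_eq)+
  moreover have "P \<noteq> 0" "Q \<noteq> 0"
    using assms disk_moebius_denom_nonzero unfolding P_def Q_def by simp_all
  ultimately have "2 * (A * cmod (z - w) / (P * Q))\<^sup>2 / (A * Z / P\<^sup>2 * (A * W / Q\<^sup>2))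
      = 2 * (cmod (z - w))\<^sup>2 / (Z * W)"
    by (simp add: field_simps power2_eq_square)
  then show ?thesis
    unfolding hdist_def norm_diff_disk_moebius[OF assms]
      one_minus_norm_disk_moebius_sq[OF assms(1,2)] one_minus_norm_disk_moebius_sq[OF assms(1,3)]
      A_def Z_def W_def P_def Q_def
    by (simp only:)
qed

lemma hdist_rotate:
  assumes "cmod u = 1"
  shows "hdist (u * z) (u * w) = hdist z w"
  using assms by (simp add: hdist_def norm_mult flip: right_diff_distrib)

lemma cosh_hdist_0:
  assumes "cmod w < 1"
  shows "cosh (hdist 0 w) = (1 + (cmod w)\<^sup>2) / (1 - (cmod w)\<^sup>2)"
  using cosh_hdist[of 0 w] assms norm_lt_1_imp_sq_lt_1[OF assms] by (simp add: field_simps)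

lemma sinh_hdist_0:
  assumes "cmod w < 1"
  shows "sinh (hdist 0 w) = 2 * cmod w / (1 - (cmod w)\<^sup>2)"
proof -
  define r where "r = cmod w"
  have r: "0 \<le> r" "1 - r\<^sup>2 \<noteq> 0" "0 < 1 - r\<^sup>2"
    using norm_lt_1_imp_sq_lt_1[OF assms] by (simp_all add: r_def)
  have "(sinh (hdist 0 w))\<^sup>2 = ((1 + r\<^sup>2) / (1 - r\<^sup>2))\<^sup>2 - 1"
    by (simp add: sinh_square_eq cosh_hdist_0[OF assms] r_def)
  also have "\<dots> = ((1 + r\<^sup>2)\<^sup>2 - (1 - r\<^sup>2)\<^sup>2) / (1 - r\<^sup>2)\<^sup>2"
    using r by (simp add: power_divide diff_divide_distrib)
  also have "(1 + r\<^sup>2)\<^sup>2 - (1 - r\<^sup>2)\<^sup>2 = (2 * r)\<^sup>2"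
    by (simp add: power2_eq_square algebra_simps)
  also have "(2 * r)\<^sup>2 / (1 - r\<^sup>2)\<^sup>2 = (2 * r / (1 - r\<^sup>2))\<^sup>2"
    by (simp add: power_divide)
  finally have "(sinh (hdist 0 w))\<^sup>2 = (2 * r / (1 - r\<^sup>2))\<^sup>2" .
  moreover have "0 \<le> sinh (hdist 0 w)"
    using hdist_nonneg[of 0 w] assms by simp
  moreover have "0 \<le> 2 * r / (1 - r\<^sup>2)"
    using r by simp
  ultimately show ?thesis
    by (simp add: r_def power2_eq_iff_nonneg)
qed

lemma hdist_0_eq_artanh:
  assumes "cmod w < 1"
  shows "hdist 0 w = 2 * artanh (cmod w)"
proof -
  define r where "r = cmod w"
  have r: "0 \<le> r" "r < 1" "r * r \<noteq> 1"
    using assms mult_strict_mono[of r 1 r 1] by (simp_all add: r_def)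
  have "exp (hdist 0 w) = cosh (hdist 0 w) + sinh (hdist 0 w)"
    by (simp add: cosh_plus_sinh)
  also have "\<dots> = (1 + r) / (1 - r)"
    using r unfolding cosh_hdist_0[OF assms] sinh_hdist_0[OF assms] r_def[symmetric]
    by (simp add: divide_simps) (simp add: power2_eq_square algebra_simps)
  finally have "hdist 0 w = ln ((1 + r) / (1 - r))"
    by (metis ln_exp)
  then show ?thesis
    by (simp add: artanh_def r_def)
qed

lemma hdist_0_mono:
  assumes "cmod v \<le> cmod w" "cmod w < 1"
  shows "hdist 0 v \<le> hdist 0 w"
proof -
  have "(cmod v)\<^sup>2 \<le> (cmod w)\<^sup>2" "(cmod w)\<^sup>2 < 1"
    using assms power_mono[OF assms(1)] norm_lt_1_imp_sq_lt_1 by simp_all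
  then have "cosh (hdist 0 v) \<le> cosh (hdist 0 w)"
    using assms unfolding cosh_hdist_0[OF assms(2)] cosh_hdist_0[OF le_less_trans[OF assms]]
    by (intro frac_le) simp_all
  moreover have "0 \<le> hdist 0 v" "0 \<le> hdist 0 w"
    using assms hdist_nonneg[of 0] by simp_all
  ultimately show ?thesis
    by (simp add: cosh_real_nonneg_le_iff)
qed

lemma hdist_triangle_0:
  assumes "cmod y < 1" "cmod z < 1"
  shows "hdist y z \<le> hdist 0 y + hdist 0 z"
proof -
  define Y Z where "Y = cmod y" and "Z = cmod z"
  have YZ: "0 < 1 - Y\<^sup>2" "0 < 1 - Z\<^sup>2"
    using assms norm_lt_1_imp_sq_lt_1 by (simp_all add: Y_def Z_def)
  have "(cmod (y - z))\<^sup>2 \<le> (Y + Z)\<^sup>2"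
    unfolding Y_def Z_def by (simp add: power_mono norm_triangle_ineq4)
  then have "cosh (hdist y z) \<le> 1 + 2 * (Y + Z)\<^sup>2 / ((1 - Y\<^sup>2) * (1 - Z\<^sup>2))"
    unfolding cosh_hdist[OF assms] Y_def[symmetric] Z_def[symmetric] using YZ
    by (simp add: divide_right_mono)
  also have "\<dots> = (1 + Y\<^sup>2) / (1 - Y\<^sup>2) * ((1 + Z\<^sup>2) / (1 - Z\<^sup>2))
      + 2 * Y / (1 - Y\<^sup>2) * (2 * Z / (1 - Z\<^sup>2))"
  proof -
    define P Q where "P = 1 - Y\<^sup>2" and "Q = 1 - Z\<^sup>2"
    have "(1 + Y\<^sup>2) * (1 + Z\<^sup>2) + 2 * Y * (2 * Z) = P * Q + 2 * (Y + Z)\<^sup>2"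
      by (simp add: P_def Q_def power2_eq_square algebra_simps)
    moreover have "P \<noteq> 0" "Q \<noteq> 0"
      using YZ by (simp_all add: P_def Q_def)
    ultimately show ?thesis
      unfolding P_def[symmetric] Q_def[symmetric] by (simp add: field_simps)
  qed
  also have "\<dots> = cosh (hdist 0 y + hdist 0 z)"
    unfolding cosh_add cosh_hdist_0[OF assms(1)] cosh_hdist_0[OF assms(2)]
      sinh_hdist_0[OF assms(1)] sinh_hdist_0[OF assms(2)] Y_def Z_def ..
  finally show ?thesis
    using assms hdist_nonneg by (simp add: cosh_real_nonneg_le_iff)
qed

lemma hdist_triangle:
  assumes "cmod x < 1" "cmod y < 1" "cmod z < 1"
  shows "hdist y z \<le> hdist y x + hdist x z"
proof -
  have "hdist y z = hdist (disk_moebius x y) (disk_moebius x z)"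
    using assms by (simp add: hdist_disk_moebius)
  also have "\<dots> \<le> hdist 0 (disk_moebius x y) + hdist 0 (disk_moebius x z)"
    using assms by (simp add: hdist_triangle_0 norm_disk_moebius_less_1)
  also have "\<dots> = hdist y x + hdist x z"
    using assms hdist_disk_moebius[of x x] by (simp add: hdist_commute)
  finally show ?thesis .
qed

lemma hdist_set_le:
  assumes "cmod q < 1" "S \<subseteq> pdisk" "p \<in> S"
  shows "hdist_set q S \<le> hdist q p"
  unfolding hdist_set_def
proof (rule cInf_lower)
  show "bdd_below {hdist q p |p. p \<in> S}"
    using assms hdist_nonneg by (auto simp: bdd_below_def pdisk_def subset_iff)
qed (use assms in auto)

lemma hdist_sets_le:
  assumes "S \<subseteq> pdisk" "T \<subseteq> pdisk" "p \<in> S" "q \<in> T"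
  shows "hdist_sets S T \<le> hdist p q"
  unfolding hdist_sets_def
proof (rule cInf_lower)
  have "0 \<le> hdist p q" if "p \<in> S" "q \<in> T" for p q
    using assms(1,2) that by (intro hdist_nonneg) (auto simp: pdisk_def)
  then show "bdd_below {hdist p q |p q. p \<in> S \<and> q \<in> T}"
    by (auto intro: bdd_belowI[of _ 0])
qed (use assms in auto)

lemma hdist_sets_greatest:
  assumes "S \<noteq> {}" "T \<noteq> {}" "\<And>p q. p \<in> S \<Longrightarrow> q \<in> T \<Longrightarrow> m \<le> hdist p q"
  shows "m \<le> hdist_sets S T"
  unfolding hdist_sets_def using assms by (intro cInf_greatest) auto

lemma hdist_sets_rotate:
  assumes "cmod u = 1"
  shows "hdist_sets ((\<lambda>z. u * z) ` S) ((\<lambda>z. u * z) ` T) = hdist_sets S T"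
proof -
  have "{hdist p q |p q. p \<in> (\<lambda>z. u * z) ` S \<and> q \<in> (\<lambda>z. u * z) ` T}
      = {hdist p q |p q. p \<in> S \<and> q \<in> T}"
  proof (intro set_eqI iffI)
    fix x
    assume "x \<in> {hdist p q |p q. p \<in> (\<lambda>z. u * z) ` S \<and> q \<in> (\<lambda>z. u * z) ` T}"
    then obtain p q where "x = hdist (u * p) (u * q)" "p \<in> S" "q \<in> T"
      by blast
    then show "x \<in> {hdist p q |p q. p \<in> S \<and> q \<in> T}"
      using hdist_rotate[OF assms] by auto
  next
    fix x
    assume "x \<in> {hdist p q |p q. p \<in> S \<and> q \<in> T}"
    then obtain p q where "x = hdist (u * p) (u * q)" "p \<in> S" "q \<in> T"
      using hdist_rotate[OF assms] by auto
    then show "x \<in> {hdist p q |p q. p \<in> (\<lambda>z. u * z) ` S \<and> q \<in> (\<lambda>z. u * z) ` T}"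
      by blast
  qed
  then show ?thesis
    by (simp add: hdist_sets_def)
qed

section \<open>Hyperbolic lines\<close>

text \<open>For \<^term>\<open>A\<^sup>2 < (cmod c)\<^sup>2\<close> the zero set of \<^term>\<open>hline_eq A c\<close> is a circle with
  centre \<^term>\<open>c / of_real A\<close> (if \<^term>\<open>A \<noteq> 0\<close>) or a line through 0 (if \<^term>\<open>A = 0\<close>), in
  either case orthogonal to the unit circle; \<^term>\<open>hline A c\<close> is its trace in the disk.\<close>

definition hline_eq :: "real \<Rightarrow> complex \<Rightarrow> complex \<Rightarrow> real" where
  "hline_eq A c z = A * (cmod z)\<^sup>2 - 2 * Re (cnj c * z) + A"

definition hline :: "real \<Rightarrow> complex \<Rightarrow> complex set" where
  "hline A c = {z. cmod z < 1 \<and> hline_eq A c z = 0}"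

definition hline_radius :: "complex \<Rightarrow> real" where
  "hline_radius c = sqrt ((cmod c)\<^sup>2 - 1)"

lemma hline_subset_pdisk: "hline A c \<subseteq> pdisk"
  by (auto simp: hline_def pdisk_def)

lemma hline_eq_1: "hline_eq 1 c z = (cmod z)\<^sup>2 - 2 * (Re c * Re z + Im c * Im z) + 1"
  by (simp add: hline_eq_def)

lemma hline_eq_1_of_real: "hline_eq 1 c (of_real x) = x\<^sup>2 - 2 * x * Re c + 1"
  by (simp add: hline_eq_1)

lemma norm_diff_sq_eq_hline_eq:
  "(cmod (z - c))\<^sup>2 = hline_eq 1 c z + (cmod c)\<^sup>2 - 1"
  unfolding hline_eq_def cmod_power2 by (simp add: power2_eq_square algebra_simps)

lemma hline_1_eq_circle:
  assumes "1 < cmod c"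
  shows "hline 1 c = {z. cmod z < 1 \<and> cmod (z - c) = hline_radius c}"
proof -
  have "cmod (z - c) = hline_radius c \<longleftrightarrow> (cmod (z - c))\<^sup>2 = (cmod c)\<^sup>2 - 1" for z
    using assms unfolding hline_radius_def
    by (metis norm_ge_zero real_sqrt_ge_zero real_sqrt_pow2_iff power2_eq_iff_nonneg less_imp_le
        one_less_power diff_ge_0_iff_ge zero_less_numeral)
  then show ?thesis
    by (auto simp: hline_def norm_diff_sq_eq_hline_eq)
qed

lemma hline_1_subset_sphere:
  assumes "1 < cmod c"
  shows "hline 1 c \<subseteq> sphere c (hline_radius c)"
  using hline_1_eq_circle[OF assms] by (auto simp: dist_norm norm_minus_commute)

lemma hline_radius_pos: "1 < cmod c \<Longrightarrow> 0 < hline_radius c"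
  by (simp add: hline_radius_def)

lemma hline_radius_sq: "1 < cmod c \<Longrightarrow> (hline_radius c)\<^sup>2 = (Re c)\<^sup>2 + (Im c)\<^sup>2 - 1"
  by (simp add: hline_radius_def cmod_power2 less_imp_le flip: cmod_power2)

lemma hline_scale:
  assumes "A \<noteq> 0"
  shows "hline A c = hline 1 (c / of_real A)"
proof -
  have "hline_eq A c z = A * hline_eq 1 (c / of_real A) z" for z
    using assms by (simp add: hline_eq_def field_simps)
  then show ?thesis
    using assms by (simp add: hline_def)
qed

lemma hline_eq_rotate:
  assumes "cmod u = 1"
  shows "hline_eq A c (u * z) = hline_eq A (cnj u * c) z"
proof -
  have "cnj (cnj u * c) * z = cnj c * (u * z)"
    by (simp add: mult_ac)
  then show ?thesis
    unfolding hline_eq_def using assms by (simp add: norm_mult algebra_simps)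
qed

lemma hline_rotate:
  assumes "cmod u = 1"
  shows "hline A c = (\<lambda>z. u * z) ` hline A (cnj u * c)"
proof -
  have inv: "u * (cnj u * z) = z" for z
    using assms complex_norm_square[of u] by (simp add: mult.assoc[symmetric])
  show ?thesis
  proof (intro set_eqI iffI)
    fix z
    assume "z \<in> hline A c"
    then have "cnj u * z \<in> hline A (cnj u * c)"
      using assms by (simp add: hline_def hline_eq_rotate[symmetric] norm_mult inv)
    then show "z \<in> (\<lambda>z. u * z) ` hline A (cnj u * c)"
      using inv[of z] by (metis image_eqI)
  next
    fix z
    assume "z \<in> (\<lambda>z. u * z) ` hline A (cnj u * c)"
    then show "z \<in> hline A c"
      using assms by (auto simp: hline_def hline_eq_rotate norm_mult)
  qed
qed

lemma hline_0_eq_diameter: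
  assumes "cmod v = 1"
  shows "hline 0 (\<i> * v) = {complex_of_real x * v | x. \<bar>x\<bar> < 1}"
proof -
  have u: "cnj v * v = 1"
    using assms complex_norm_square[of v] by (simp add: mult.commute)
  have "hline_eq 0 (\<i> * v) z = 0 \<longleftrightarrow> (\<exists>x. z = of_real x * v)" for z
  proof
    assume "hline_eq 0 (\<i> * v) z = 0"
    then have "cnj v * z = of_real (Re (cnj v * z))"
      by (simp add: hline_eq_def complex_eq_iff)
    then have "z = of_real (Re (cnj v * z)) * v"
      using u by (metis mult.assoc mult.commute mult_1)
    then show "\<exists>x. z = of_real x * v" ..
  next
    assume "\<exists>x. z = of_real x * v"
    then show "hline_eq 0 (\<i> * v) z = 0"
      using u by (auto simp: hline_eq_def mult.left_commute)
  qed
  then show ?thesis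
    using assms by (auto simp: hline_def norm_mult)
qed

text \<open>Coefficients of the pull-back of \<^term>\<open>hline_eq A c\<close> under \<^term>\<open>disk_moebius a\<close>,
  which equals \<^term>\<open>hline_eq A c (disk_moebius a z)\<close> up to the positive factor
  \<^term>\<open>(cmod (1 - cnj a * z))\<^sup>2\<close>.\<close>

definition moebius_A :: "complex \<Rightarrow> real \<Rightarrow> complex \<Rightarrow> real" where
  "moebius_A a A c = A * (1 + (cmod a)\<^sup>2) + 2 * Re (cnj c * a)"

definition moebius_c :: "complex \<Rightarrow> real \<Rightarrow> complex \<Rightarrow> complex" where
  "moebius_c a A c = c + cnj c * a\<^sup>2 + 2 * of_real A * a"

lemma hline_eq_disk_moebius:
  assumes "cmod a < 1" "cmod z < 1"
  shows "hline_eq A c (disk_moebius a z) * (cmod (1 - cnj a * z))\<^sup>2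
           = hline_eq (moebius_A a A c) (moebius_c a A c) z"
proof -
  define D where "D = 1 - cnj a * z"
  have "D \<noteq> 0"
    using disk_moebius_denom_nonzero[OF assms] by (simp add: D_def)
  then have mD: "disk_moebius a z * D = z - a"
    by (simp add: disk_moebius_def D_def)
  have "(cmod (disk_moebius a z))\<^sup>2 * (cmod D)\<^sup>2 = (cmod (z - a))\<^sup>2"
    by (metis mD norm_mult power_mult_distrib)
  moreover have "Re (cnj c * disk_moebius a z) * (cmod D)\<^sup>2 = Re (cnj c * (z - a) * cnj D)"
  proof -
    have "Re (cnj c * disk_moebius a z) * (cmod D)\<^sup>2
        = Re (cnj c * disk_moebius a z * of_real ((cmod D)\<^sup>2))"
      by simp
    also have "cnj c * disk_moebius a z * of_real ((cmod D)\<^sup>2) = cnj c * (z - a) * cnj D"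
      unfolding complex_norm_square mD[symmetric] by (simp only: mult_ac)
    finally show ?thesis .
  qed
  ultimately have "hline_eq A c (disk_moebius a z) * (cmod D)\<^sup>2
      = A * (cmod (z - a))\<^sup>2 - 2 * Re (cnj c * (z - a) * cnj D) + A * (cmod D)\<^sup>2"
    by (simp add: hline_eq_def algebra_simps)
  also have "\<dots> = hline_eq (moebius_A a A c) (moebius_c a A c) z"
    unfolding hline_eq_def moebius_A_def moebius_c_def D_def cmod_power2
    by (simp add: power2_eq_square algebra_simps)
  finally show ?thesis
    by (simp add: D_def)
qed

lemma moebius_discriminant:
  "(cmod (moebius_c a A c))\<^sup>2 - (moebius_A a A c)\<^sup>2 = (1 - (cmod a)\<^sup>2)\<^sup>2 * ((cmod c)\<^sup>2 - A\<^sup>2)"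
  unfolding moebius_A_def moebius_c_def cmod_power2
  by (simp add: power2_eq_square algebra_simps)

lemma moebius_A_minus: "moebius_A (- q) A c = hline_eq A c q"
  by (simp add: moebius_A_def hline_eq_def algebra_simps)

lemma mem_hline_moebius_iff:
  assumes "cmod a < 1"
  shows "w \<in> hline (moebius_A a A c) (moebius_c a A c)
           \<longleftrightarrow> cmod w < 1 \<and> disk_moebius a w \<in> hline A c"
proof (cases "cmod w < 1")
  case True
  then have "(cmod (1 - cnj a * w))\<^sup>2 \<noteq> 0"
    using assms disk_moebius_denom_nonzero by simp
  then show ?thesis
    using hline_eq_disk_moebius[OF assms True, of A c] norm_disk_moebius_less_1[OF assms True] True
    by (auto simp: hline_def)
qed (simp add: hline_def)

section \<open>Distance from a point to a hyperbolic line\<close>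

lemma norm_shrink_towards_0:
  assumes "0 < R" "R < cmod c"
  shows "cmod (of_real (1 - R / cmod c) * c) = cmod c - R"
    and "cmod (of_real (1 - R / cmod c) * c - c) = R"
proof -
  have "0 < cmod c"
    using assms by linarith
  moreover have "0 \<le> 1 - R / cmod c"
    using assms \<open>0 < cmod c\<close> by (simp add: field_simps)
  ultimately show "cmod (of_real (1 - R / cmod c) * c) = cmod c - R"
    unfolding norm_mult norm_of_real by (simp add: left_diff_distrib)
  have shrink: "of_real (1 - R / cmod c) * c - c = - (of_real (R / cmod c) * c)"
    by (simp add: algebra_simps)
  show "cmod (of_real (1 - R / cmod c) * c - c) = R"
    unfolding shrink norm_minus_cancel norm_mult norm_of_real using \<open>0 < cmod c\<close> assms(1) by simp
qed

lemma hline_1_nearest_to_0: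
  assumes "1 < cmod c"
  obtains w0 where "w0 \<in> hline 1 c" "sinh (hdist 0 w0) = 1 / hline_radius c"
    "\<And>w. w \<in> hline 1 c \<Longrightarrow> hdist 0 w0 \<le> hdist 0 w"
proof -
  define C R where "C = cmod c" and "R = hline_radius c"
  have R: "0 < R" "R\<^sup>2 = C\<^sup>2 - 1"
    using assms by (simp_all add: R_def C_def hline_radius_def)
  have "R < C"
    using R assms power2_less_imp_less[of R C] by (simp add: C_def)
  have "(C - 1)\<^sup>2 < R\<^sup>2"
    using R assms by (simp add: C_def power2_eq_square algebra_simps)
  then have "C - 1 < R"
    using R power2_less_imp_less[of "C - 1" R] by simp
  define w0 where "w0 = of_real (1 - R / C) * c"
  have w0: "cmod w0 = C - R" "cmod (w0 - c) = R"
    using norm_shrink_towards_0[OF R(1) \<open>R < C\<close>[unfolded C_def]] by (simp_all add: w0_def C_def)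
  then have "w0 \<in> hline 1 c"
    using \<open>C - 1 < R\<close> assms by (simp add: hline_1_eq_circle R_def)
  moreover have "sinh (hdist 0 w0) = 1 / hline_radius c"
  proof -
    have den: "1 - (C - R)\<^sup>2 = 2 * R * (C - R)"
      using R by (simp add: power2_eq_square algebra_simps)
    have "2 * (C - R) / (1 - (C - R)\<^sup>2) = 1 / R"
      unfolding den using R(1) \<open>R < C\<close> by (simp add: field_simps)
    then show ?thesis
      using w0 \<open>C - 1 < R\<close> \<open>R < C\<close> by (simp add: sinh_hdist_0 R_def)
  qed
  moreover have "hdist 0 w0 \<le> hdist 0 w" if "w \<in> hline 1 c" for w
  proof -
    have "cmod w < 1" "cmod (w - c) = R"
      using that assms by (simp_all add: hline_1_eq_circle R_def)
    moreover have "C \<le> cmod (w - c) + cmod w"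
      using norm_triangle_ineq[of "c - w" w] by (simp add: C_def norm_minus_commute)
    ultimately show ?thesis
      using w0(1) by (intro hdist_0_mono) simp_all
  qed
  ultimately show ?thesis
    by (rule that)
qed

lemma hline_nearest_to_0:
  assumes "A\<^sup>2 < (cmod c)\<^sup>2"
  shows "\<exists>w0\<in>hline A c. hdist 0 w0 = arsinh (\<bar>A\<bar> / sqrt ((cmod c)\<^sup>2 - A\<^sup>2))
           \<and> (\<forall>w\<in>hline A c. hdist 0 w0 \<le> hdist 0 w)"
proof (cases "A = 0")
  case True
  then have "0 \<in> hline A c"
    by (simp add: hline_def hline_eq_def)
  moreover have "hdist 0 0 \<le> hdist 0 w" if "w \<in> hline A c" for w
    using that hdist_nonneg by (simp add: hline_def)
  ultimately show ?thesis
    using True by (intro bexI[of _ 0]) auto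
next
  case False
  define C where "C = c / of_real A"
  have "\<bar>A\<bar> < cmod c"
    using assms power2_less_imp_less[of "\<bar>A\<bar>" "cmod c"] by simp
  then have "1 < cmod C"
    using False by (simp add: C_def norm_divide)
  have "(cmod C)\<^sup>2 - 1 = ((cmod c)\<^sup>2 - A\<^sup>2) / A\<^sup>2"
    using False by (simp add: C_def norm_divide power_divide diff_divide_distrib)
  then have "hline_radius C = sqrt ((cmod c)\<^sup>2 - A\<^sup>2) / \<bar>A\<bar>"
    by (simp add: hline_radius_def real_sqrt_divide)
  then have "\<bar>A\<bar> / sqrt ((cmod c)\<^sup>2 - A\<^sup>2) = 1 / hline_radius C"
    by simp
  moreover obtain w0 where "w0 \<in> hline 1 C" "sinh (hdist 0 w0) = 1 / hline_radius C"
    "\<And>w. w \<in> hline 1 C \<Longrightarrow> hdist 0 w0 \<le> hdist 0 w"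
    using hline_1_nearest_to_0[OF \<open>1 < cmod C\<close>] by blast
  moreover from this(2) have "hdist 0 w0 = arsinh (1 / hline_radius C)"
    by (metis arsinh_sinh_real)
  ultimately show ?thesis
    unfolding hline_scale[OF False] C_def[symmetric] by auto
qed

lemma hline_nearest_point:
  assumes "cmod q < 1" "A\<^sup>2 < (cmod c)\<^sup>2"
  shows "\<exists>p0\<in>hline A c.
           hdist q p0 = arsinh (\<bar>hline_eq A c q\<bar> / ((1 - (cmod q)\<^sup>2) * sqrt ((cmod c)\<^sup>2 - A\<^sup>2)))
           \<and> (\<forall>p\<in>hline A c. hdist q p0 \<le> hdist q p)"
proof -
  define A' c' where "A' = moebius_A (- q) A c" and "c' = moebius_c (- q) A c"
  have mq: "cmod (- q) < 1"
    using assms by simp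
  have "0 < 1 - (cmod q)\<^sup>2"
    using norm_lt_1_imp_sq_lt_1[OF assms(1)] by simp
  then have "sqrt ((cmod c')\<^sup>2 - A'\<^sup>2) = (1 - (cmod q)\<^sup>2) * sqrt ((cmod c)\<^sup>2 - A\<^sup>2)"
    using moebius_discriminant[of "- q" A c] by (simp add: A'_def c'_def real_sqrt_mult)
  moreover have "0 < (1 - (cmod q)\<^sup>2)\<^sup>2 * ((cmod c)\<^sup>2 - A\<^sup>2)"
    using assms \<open>0 < 1 - (cmod q)\<^sup>2\<close> by simp
  then have "A'\<^sup>2 < (cmod c')\<^sup>2"
    using moebius_discriminant[of "- q" A c] by (simp add: A'_def c'_def)
  ultimately obtain w0 where w0: "w0 \<in> hline A' c'"
    "hdist 0 w0 = arsinh (\<bar>hline_eq A c q\<bar> / ((1 - (cmod q)\<^sup>2) * sqrt ((cmod c)\<^sup>2 - A\<^sup>2)))"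
    "\<And>w. w \<in> hline A' c' \<Longrightarrow> hdist 0 w0 \<le> hdist 0 w"
    using hline_nearest_to_0[of A' c'] by (auto simp: A'_def moebius_A_minus)
  have mem: "w \<in> hline A' c' \<longleftrightarrow> cmod w < 1 \<and> disk_moebius (- q) w \<in> hline A c" for w
    unfolding A'_def c'_def by (rule mem_hline_moebius_iff[OF mq])
  have hdist_q: "hdist q p = hdist 0 (disk_moebius q p)" if "cmod p < 1" for p
    using hdist_disk_moebius[OF assms(1) assms(1) that] by simp
  have "cmod w0 < 1"
    using w0(1) by (simp add: hline_def)
  define p0 where "p0 = disk_moebius (- q) w0"
  have "disk_moebius q p0 = w0"
    using disk_moebius_inverse[OF mq \<open>cmod w0 < 1\<close>] by (simp add: p0_def)
  moreover have "p0 \<in> hline A c"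
    using mem w0(1) by (simp add: p0_def)
  moreover have "hdist 0 w0 \<le> hdist q p" if "p \<in> hline A c" for p
  proof -
    have "cmod p < 1"
      using that by (simp add: hline_def)
    then have "disk_moebius q p \<in> hline A' c'"
      using mem that assms(1) disk_moebius_inverse norm_disk_moebius_less_1 by simp
    then show ?thesis
      using w0(3) hdist_q \<open>cmod p < 1\<close> by simp
  qed
  ultimately show ?thesis
    using w0(2) hdist_q[of p0] by (metis hline_def mem_Collect_eq)
qed

lemma hdist_set_hline:
  assumes "cmod q < 1" "A\<^sup>2 < (cmod c)\<^sup>2"
  shows "hdist_set q (hline A c)
           = arsinh (\<bar>hline_eq A c q\<bar> / ((1 - (cmod q)\<^sup>2) * sqrt ((cmod c)\<^sup>2 - A\<^sup>2)))"
proof -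
  obtain p0 where "p0 \<in> hline A c"
    "hdist q p0 = arsinh (\<bar>hline_eq A c q\<bar> / ((1 - (cmod q)\<^sup>2) * sqrt ((cmod c)\<^sup>2 - A\<^sup>2)))"
    "\<And>p. p \<in> hline A c \<Longrightarrow> hdist q p0 \<le> hdist q p"
    using hline_nearest_point[OF assms] by blast
  then show ?thesis
    unfolding hdist_set_def by (intro cInf_eq_minimum) (auto intro!: exI[of _ p0])
qed

lemma hdist_set_hline_attained:
  assumes "cmod q < 1" "A\<^sup>2 < (cmod c)\<^sup>2"
  obtains p where "p \<in> hline A c" "hdist q p = hdist_set q (hline A c)"
  using hline_nearest_point[OF assms] hdist_set_hline[OF assms] by auto

lemma hdist_set_hline_1:
  assumes "cmod q < 1" "1 < cmod c"
  shows "hdist_set q (hline 1 c) = arsinh (\<bar>hline_eq 1 c q\<bar> / ((1 - (cmod q)\<^sup>2) * hline_radius c))"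
  using assms hdist_set_hline[of q 1 c] by (simp add: hline_radius_def)

lemma hdist_set_hline_1_of_real:
  assumes "\<bar>x\<bar> < 1" "1 < cmod c"
  shows "hdist_set (of_real x) (hline 1 c)
           = arsinh (\<bar>x\<^sup>2 - 2 * x * Re c + 1\<bar> / ((1 - x\<^sup>2) * hline_radius c))"
  using assms by (simp add: hdist_set_hline_1 hline_eq_1_of_real)

lemma hdist_set_hline_rotate:
  assumes "cmod u = 1" "cmod q < 1" "1 < cmod c"
  shows "hdist_set (u * q) (hline 1 c) = hdist_set q (hline 1 (cnj u * c))"
proof -
  have "1\<^sup>2 < (cmod c)\<^sup>2" "1\<^sup>2 < (cmod (cnj u * c))\<^sup>2" "cmod (u * q) < 1"
    using assms by (simp_all add: norm_mult)
  then show ?thesis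
    using assms by (simp add: hdist_set_hline hline_eq_rotate norm_mult)
qed

lemma hline_1_nonempty:
  assumes "1 < cmod c"
  obtains p where "p \<in> hline 1 c"
  using hline_nearest_point[of 0 1 c] assms by auto

lemma hdist_sets_hline_le_add:
  assumes "cmod q < 1" "A1\<^sup>2 < (cmod c1)\<^sup>2" "A2\<^sup>2 < (cmod c2)\<^sup>2"
  shows "hdist_sets (hline A1 c1) (hline A2 c2) \<le> hdist_set q (hline A1 c1) + hdist_set q (hline A2 c2)"
proof -
  obtain p1 p2 where p1: "p1 \<in> hline A1 c1" "hdist q p1 = hdist_set q (hline A1 c1)"
    and p2: "p2 \<in> hline A2 c2" "hdist q p2 = hdist_set q (hline A2 c2)"
    using hdist_set_hline_attained assms by metis
  have "hdist_sets (hline A1 c1) (hline A2 c2) \<le> hdist p1 p2"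
    using p1 p2 hline_subset_pdisk by (intro hdist_sets_le) auto
  also have "\<dots> \<le> hdist p1 q + hdist q p2"
    using p1 p2 assms(1) by (intro hdist_triangle) (auto simp: hline_def)
  finally show ?thesis
    using p1 p2 by (simp add: hdist_commute)
qed

section \<open>Complete geodesics are hyperbolic lines\<close>

lemma norm_diff_sq: "(cmod (x - y))\<^sup>2 = (cmod x)\<^sup>2 + (cmod y)\<^sup>2 - 2 * Re (x * cnj y)"
  unfolding cmod_power2 by (simp add: power2_eq_square algebra_simps)

lemma tanh_artanh_real:
  fixes x :: real
  assumes "\<bar>x\<bar> < 1"
  shows "tanh (artanh x) = x"
proof -
  define e where "e = exp (- 2 * artanh x)"
  have "0 < 1 + x"
    using assms by linarith
  have "e = (1 - x) / (1 + x)"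
    using assms by (simp add: e_def artanh_def exp_minus)
  then have "e * (1 + x) = 1 - x"
    using \<open>0 < 1 + x\<close> by simp
  then have "1 - e = x * (1 + e)"
    by (simp add: ring_distribs mult.commute)
  moreover have "0 < e"
    by (simp add: e_def)
  ultimately show ?thesis
    unfolding tanh_real_altdef e_def[symmetric] by (simp add: divide_eq_eq)
qed

lemma hdist_tanh_half:
  "hdist (of_real (tanh (s / 2))) (of_real (tanh (t / 2))) = \<bar>s - t\<bar>"
proof -
  define \<sigma> \<tau> where "\<sigma> = tanh (s / 2)" and "\<tau> = tanh (t / 2)"
  have disk: "cmod (of_real \<sigma>) < 1" "cmod (of_real \<tau>) < 1"
    using tanh_real_bounds[of "s / 2"] tanh_real_bounds[of "t / 2"] by (auto simp: \<sigma>_def \<tau>_def)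
  have "disk_moebius (of_real \<sigma>) (of_real \<tau>) = of_real ((\<tau> - \<sigma>) / (1 - \<sigma> * \<tau>))"
    by (simp add: disk_moebius_def)
  also have "(\<tau> - \<sigma>) / (1 - \<sigma> * \<tau>) = tanh ((t - s) / 2)"
    using tanh_add[of "t / 2" "- (s / 2)"] by (simp add: \<sigma>_def \<tau>_def diff_divide_distrib mult.commute)
  finally have "hdist (of_real \<sigma>) (of_real \<tau>) = hdist 0 (of_real (tanh ((t - s) / 2)))"
    using hdist_disk_moebius[OF disk(1) disk(1) disk(2)] by simp
  also have "\<dots> = 2 * artanh (tanh (\<bar>t - s\<bar> / 2))"
  proof -
    have "cmod (of_real (tanh ((t - s) / 2))) = tanh (\<bar>t - s\<bar> / 2)"
      using tanh_real_abs[of "(t - s) / 2"] by simp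
    then show ?thesis
      using tanh_real_bounds[of "\<bar>t - s\<bar> / 2"] by (simp add: hdist_0_eq_artanh)
  qed
  also have "\<dots> = \<bar>s - t\<bar>"
    by (simp add: artanh_tanh_real abs_minus_commute)
  finally show ?thesis
    by (simp add: \<sigma>_def \<tau>_def)
qed

lemma norm_eq_tanh_half:
  assumes "cmod w < 1" "hdist 0 w = \<bar>t\<bar>"
  shows "cmod w = \<bar>tanh (t / 2)\<bar>"
proof -
  have artanh_w: "artanh (cmod w) = \<bar>t\<bar> / 2"
    using assms by (simp add: hdist_0_eq_artanh)
  have "tanh (artanh (cmod w)) = cmod w"
    using assms(1) by (simp add: tanh_artanh_real)
  then have "tanh (\<bar>t\<bar> / 2) = cmod w"
    unfolding artanh_w .
  then show ?thesis
    by (simp flip: tanh_real_abs)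
qed

lemma isometric_line_through_0:
  fixes g :: "real \<Rightarrow> complex"
  assumes disk: "\<And>t. cmod (g t) < 1"
    and isometric: "\<And>s t. hdist (g s) (g t) = \<bar>s - t\<bar>"
    and "g 0 = 0"
  obtains v where "cmod v = 1" "\<And>t. g t = of_real (tanh (t / 2)) * v"
proof -
  define \<tau> :: "real \<Rightarrow> real" where "\<tau> t = tanh (t / 2)" for t
  have norm_g: "cmod (g t) = \<bar>\<tau> t\<bar>" for t
    using norm_eq_tanh_half[OF disk] isometric[of 0 t] \<open>g 0 = 0\<close> by (simp add: \<tau>_def)
  \<comment> \<open>\<^term>\<open>\<tau>\<close> parametrises the real diameter by arc length; compare \<^term>\<open>g\<close> with it.\<close>
  have norm_diff_g: "(cmod (g s - g t))\<^sup>2 = (\<tau> s - \<tau> t)\<^sup>2" for s t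
  proof -
    have disk_\<tau>: "cmod (of_real (\<tau> t)) < 1" for t
      using norm_g disk by simp
    have "cosh (hdist (g s) (g t)) = cosh (hdist (of_real (\<tau> s)) (of_real (\<tau> t)))"
      using isometric hdist_tanh_half by (simp add: \<tau>_def)
    then have "2 * (cmod (g s - g t))\<^sup>2 / ((1 - (\<tau> s)\<^sup>2) * (1 - (\<tau> t)\<^sup>2))
        = 2 * (\<tau> s - \<tau> t)\<^sup>2 / ((1 - (\<tau> s)\<^sup>2) * (1 - (\<tau> t)\<^sup>2))"
      unfolding cosh_hdist[OF disk disk] cosh_hdist[OF disk_\<tau> disk_\<tau>] norm_g
      by (simp flip: of_real_diff)
    moreover have "(1 - (\<tau> s)\<^sup>2) * (1 - (\<tau> t)\<^sup>2) \<noteq> 0"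
      using disk_\<tau>[of s] disk_\<tau>[of t] by (simp add: abs_square_eq_1)
    ultimately show ?thesis
      by simp
  qed
  have inner_g: "Re (g s * cnj (g t)) = \<tau> s * \<tau> t" for s t
  proof -
    have "(cmod (g s - g t))\<^sup>2 = (\<tau> s - \<tau> t)\<^sup>2"
      by (rule norm_diff_g)
    then show ?thesis
      unfolding norm_diff_sq norm_g by (simp add: power2_eq_square algebra_simps)
  qed
  have "0 < \<tau> 1"
    by (simp add: \<tau>_def)
  define v where "v = g 1 / of_real (\<tau> 1)"
  have "cmod v = 1"
    using norm_g[of 1] \<open>0 < \<tau> 1\<close> by (simp add: v_def norm_divide)
  moreover have "g t = of_real (\<tau> t) * v" for t
  proof -
    have "Re (g t * cnj v) = \<tau> t"
      using inner_g[of t 1] \<open>0 < \<tau> 1\<close> by (simp add: v_def)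
    moreover have "Re (g t * cnj (of_real (\<tau> t) * v)) = \<tau> t * Re (g t * cnj v)"
      by (simp add: algebra_simps)
    moreover have "cmod (of_real (\<tau> t) * v) = \<bar>\<tau> t\<bar>"
      using \<open>cmod v = 1\<close> by (simp add: norm_mult)
    ultimately have "(cmod (g t - of_real (\<tau> t) * v))\<^sup>2 = 0"
      unfolding norm_diff_sq norm_g by (simp add: power2_eq_square)
    then show ?thesis
      by simp
  qed
  ultimately show ?thesis
    by (intro that[of v]) (auto simp: \<tau>_def)
qed

lemma range_tanh_half_times:
  "range (\<lambda>t. of_real (tanh (t / 2)) * v) = {complex_of_real x * v | x. \<bar>x\<bar> < 1}"
proof (intro set_eqI iffI)
  fix z
  assume "z \<in> range (\<lambda>t. of_real (tanh (t / 2)) * v)"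
  then show "z \<in> {complex_of_real x * v | x. \<bar>x\<bar> < 1}"
    using tanh_real_bounds by (fastforce simp: abs_less_iff)
next
  fix z
  assume "z \<in> {complex_of_real x * v | x. \<bar>x\<bar> < 1}"
  then obtain x where "z = of_real x * v" "\<bar>x\<bar> < 1"
    by blast
  then have "z = of_real (tanh (2 * artanh x / 2)) * v"
    by (simp add: tanh_artanh_real)
  then show "z \<in> range (\<lambda>t. of_real (tanh (t / 2)) * v)"
    by blast
qed

lemma hgeodesic_imp_hline:
  assumes "hgeodesic G"
  obtains A c where "A\<^sup>2 < (cmod c)\<^sup>2" "G = hline A c"
proof -
  obtain f where disk_f: "\<And>t. cmod (f t) < 1" and isometric: "\<And>s t. hdist (f s) (f t) = \<bar>s - t\<bar>"
    and G: "G = range f"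
    using assms by (auto simp: hgeodesic_def pdisk_def)
  define a where "a = f 0"
  have a: "cmod a < 1"
    using disk_f by (simp add: a_def)
  define g where "g t = disk_moebius a (f t)" for t
  have "cmod (g t) < 1" for t
    using a disk_f by (simp add: g_def norm_disk_moebius_less_1)
  moreover have "hdist (g s) (g t) = \<bar>s - t\<bar>" for s t
    using a disk_f by (simp add: g_def hdist_disk_moebius isometric)
  moreover have "g 0 = 0"
    by (simp add: g_def a_def)
  ultimately obtain v where v: "cmod v = 1" "\<And>t. g t = of_real (tanh (t / 2)) * v"
    using isometric_line_through_0 by blast
  then have range_g: "range g = hline 0 (\<i> * v)"
    by (simp add: hline_0_eq_diameter range_tanh_half_times)
  define A c where "A = moebius_A a 0 (\<i> * v)" and "c = moebius_c a 0 (\<i> * v)"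
  have "0 < (1 - (cmod a)\<^sup>2)\<^sup>2"
    using norm_lt_1_imp_sq_lt_1[OF a] by simp
  moreover have "(cmod c)\<^sup>2 - A\<^sup>2 = (1 - (cmod a)\<^sup>2)\<^sup>2"
    using moebius_discriminant[of a 0 "\<i> * v"] v(1) by (simp add: A_def c_def norm_mult)
  ultimately have "A\<^sup>2 < (cmod c)\<^sup>2"
    by linarith
  moreover have "G = hline A c"
  proof (intro set_eqI iffI)
    fix z
    assume "z \<in> G"
    then show "z \<in> hline A c"
      unfolding A_def c_def mem_hline_moebius_iff[OF a] range_g[symmetric]
      using G disk_f by (auto simp: g_def)
  next
    fix z
    assume "z \<in> hline A c"
    then have "cmod z < 1" "disk_moebius a z \<in> range g"
      unfolding A_def c_def mem_hline_moebius_iff[OF a] range_g by auto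
    then obtain t where "disk_moebius a z = disk_moebius a (f t)"
      by (auto simp: g_def)
    then have "z = f t"
      by (metis a disk_f \<open>cmod z < 1\<close> disk_moebius_inverse)
    then show "z \<in> G"
      using G by simp
  qed
  ultimately show ?thesis
    using that by blast
qed

lemma hdist_set_hgeodesic_eq_0_iff:
  assumes "hgeodesic G" "cmod q < 1"
  shows "hdist_set q G = 0 \<longleftrightarrow> q \<in> G"
proof -
  obtain A c where D: "A\<^sup>2 < (cmod c)\<^sup>2" and G: "G = hline A c"
    using hgeodesic_imp_hline[OF assms(1)] .
  have "0 < (1 - (cmod q)\<^sup>2) * sqrt ((cmod c)\<^sup>2 - A\<^sup>2)"
    using D norm_lt_1_imp_sq_lt_1[OF assms(2)] by simp
  then show ?thesis
    unfolding G hdist_set_hline[OF assms(2) D] using assms(2) by (auto simp: hline_def)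
qed

lemma hgeodesic_avoiding_0:
  assumes "hgeodesic G" "0 \<notin> G"
  obtains c where "1 < cmod c" "G = hline 1 c"
proof -
  obtain A c where D: "A\<^sup>2 < (cmod c)\<^sup>2" and G: "G = hline A c"
    using hgeodesic_imp_hline[OF assms(1)] .
  have "A \<noteq> 0"
    using assms(2) G by (auto simp: hline_def hline_eq_def)
  have "\<bar>A\<bar> < cmod c"
    using D power2_less_imp_less[of "\<bar>A\<bar>" "cmod c"] by simp
  then have "1 < cmod (c / of_real A)"
    using \<open>A \<noteq> 0\<close> by (simp add: norm_divide)
  then show ?thesis
    using that G hline_scale[OF \<open>A \<noteq> 0\<close>] by blast
qed

section \<open>Two hyperbolic lines on opposite sides of the real diameter\<close>

lemma quadratic_minus_sqrt_identity:
  fixes a s x :: real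
  assumes "s\<^sup>2 = 1 - a\<^sup>2"
  shows "(1 + s) * ((x\<^sup>2 - 2 * x * a + 1) - s * (1 - x\<^sup>2)) = ((1 + s) * x - a)\<^sup>2"
  using assms by (simp add: power2_eq_square algebra_simps)

lemma quadratic_ge_sqrt:
  fixes a x :: real
  assumes "\<bar>a\<bar> \<le> 1"
  shows "sqrt (1 - a\<^sup>2) * (1 - x\<^sup>2) \<le> x\<^sup>2 - 2 * x * a + 1"
proof -
  have "a\<^sup>2 \<le> 1"
    using assms by (simp add: abs_square_le_1)
  then have "0 \<le> (1 + sqrt (1 - a\<^sup>2)) * ((x\<^sup>2 - 2 * x * a + 1) - sqrt (1 - a\<^sup>2) * (1 - x\<^sup>2))"
    by (simp only: quadratic_minus_sqrt_identity real_sqrt_pow2 diff_ge_0_iff_ge zero_le_power2)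
  moreover have "0 < 1 + sqrt (1 - a\<^sup>2)"
    using \<open>a\<^sup>2 \<le> 1\<close> by (simp add: add_pos_nonneg)
  ultimately show ?thesis
    by (simp add: zero_le_mult_iff)
qed

lemma quadratic_at_nearest_point:
  fixes a :: real
  assumes "\<bar>a\<bar> < 1"
  defines "x \<equiv> a / (1 + sqrt (1 - a\<^sup>2))"
  shows "\<bar>x\<bar> < 1" and "\<bar>x\<^sup>2 - 2 * x * a + 1\<bar> / (1 - x\<^sup>2) = sqrt (1 - a\<^sup>2)"
proof -
  define s where "s = sqrt (1 - a\<^sup>2)"
  have s: "0 \<le> s" "s\<^sup>2 = 1 - a\<^sup>2"
    using assms(1) abs_square_less_1[of a] by (simp_all add: s_def)
  have x: "x = a / (1 + s)"
    by (simp add: x_def s_def)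
  show "\<bar>x\<bar> < 1"
    using assms(1) s by (simp add: x abs_divide)
  then have "0 < 1 - x\<^sup>2"
    by (simp add: abs_square_less_1)
  have "(1 + s) * x - a = 0"
    using s by (simp add: x)
  then have "x\<^sup>2 - 2 * x * a + 1 = s * (1 - x\<^sup>2)"
    using quadratic_minus_sqrt_identity[OF s(2), of x] s(1) by simp
  then show "\<bar>x\<^sup>2 - 2 * x * a + 1\<bar> / (1 - x\<^sup>2) = sqrt (1 - a\<^sup>2)"
    using s(1) \<open>0 < 1 - x\<^sup>2\<close> by (simp add: abs_mult s_def)
qed

lemma quadratic_near_tangency:
  fixes a d :: real
  assumes "\<bar>a\<bar> = 1" "0 < d" "d < 1"
  defines "x \<equiv> a * (1 - d)"
  shows "\<bar>x\<bar> < 1" and "\<bar>x\<^sup>2 - 2 * x * a + 1\<bar> / (1 - x\<^sup>2) \<le> d"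
proof -
  show "\<bar>x\<bar> < 1"
    using assms by (simp add: x_def abs_mult)
  have "a\<^sup>2 = 1"
    using assms(1) by (simp add: abs_square_eq_1)
  have "x * a = a\<^sup>2 * (1 - d)"
    by (simp add: x_def power2_eq_square mult_ac)
  moreover have "x\<^sup>2 = a\<^sup>2 * (1 - d)\<^sup>2"
    by (simp add: x_def power_mult_distrib)
  ultimately have "x\<^sup>2 = (1 - d)\<^sup>2" "x * a = 1 - d"
    using \<open>a\<^sup>2 = 1\<close> by simp_all
  then have "x\<^sup>2 - 2 * x * a + 1 = d\<^sup>2" "1 - x\<^sup>2 = d * (2 - d)"
    by (simp_all only: mult.assoc) (simp_all add: power2_eq_square algebra_simps)
  then have "\<bar>x\<^sup>2 - 2 * x * a + 1\<bar> / (1 - x\<^sup>2) = d / (2 - d)"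
    using assms(2,3) by (simp add: power2_eq_square)
  also have "\<dots> \<le> d"
    using assms(2,3) by (simp add: divide_simps)
  finally show "\<bar>x\<^sup>2 - 2 * x * a + 1\<bar> / (1 - x\<^sup>2) \<le> d" .
qed

lemma arsinh_mono:
  fixes x y :: real
  shows "x \<le> y \<Longrightarrow> arsinh x \<le> arsinh y"
  by (meson arsinh_less_iff_real not_le)

lemma arsinh_le_double:
  fixes y :: real
  assumes "0 \<le> y"
  shows "arsinh y \<le> 2 * y"
proof -
  have "sqrt (y\<^sup>2 + 1) \<le> y + 1"
    using assms by (intro real_le_lsqrt) (simp_all add: power2_eq_square algebra_simps)
  moreover have "ln (y + sqrt (y\<^sup>2 + 1)) \<le> y + sqrt (y\<^sup>2 + 1) - 1"
    using arsinh_real_aux[of y] by (rule ln_le_minus_one)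
  ultimately show ?thesis
    unfolding arsinh_real_def by linarith
qed

lemma arsinh_add_arsinh:
  fixes s \<rho>1 \<rho>2 b1 b2 :: real
  assumes "0 \<le> s" "0 < \<rho>1" "0 < \<rho>2" "s\<^sup>2 + \<rho>1\<^sup>2 = b1\<^sup>2" "s\<^sup>2 + \<rho>2\<^sup>2 = b2\<^sup>2" "b1 * b2 < 0"
  shows "arsinh (s / \<rho>1) + arsinh (s / \<rho>2) = arsinh (s * \<bar>b1 - b2\<bar> / (\<rho>1 * \<rho>2))"
proof -
  have cosh_arsinh: "cosh (arsinh (s / \<rho>)) = \<bar>b\<bar> / \<rho>" if "0 < \<rho>" "s\<^sup>2 + \<rho>\<^sup>2 = b\<^sup>2" for \<rho> b
  proof -
    have "(s / \<rho>)\<^sup>2 + 1 = (\<bar>b\<bar> / \<rho>)\<^sup>2"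
      using that by (simp add: field_simps)
    then show ?thesis
      using that(1) by (simp add: cosh_arsinh_real)
  qed
  have "\<bar>b1 - b2\<bar> = \<bar>b1\<bar> + \<bar>b2\<bar>"
    using assms(6) by (auto simp: abs_if mult_less_0_iff)
  then have "sinh (arsinh (s / \<rho>1) + arsinh (s / \<rho>2)) = s * \<bar>b1 - b2\<bar> / (\<rho>1 * \<rho>2)"
    unfolding sinh_add cosh_arsinh[OF assms(2,4)] cosh_arsinh[OF assms(3,5)]
    using assms(2,3) by (simp add: field_simps)
  then show ?thesis
    by (metis arsinh_sinh_real)
qed

lemma le_0_if_le_small_multiples:
  fixes h K :: real
  assumes "0 < K" "\<And>d. 0 < d \<Longrightarrow> d < 1 \<Longrightarrow> h \<le> d * K"
  shows "h \<le> 0"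
proof (rule field_le_epsilon)
  fix e :: real
  assume "0 < e"
  define d where "d = min (1 / 2) (e / K)"
  have "0 < d" "d < 1" "d * K \<le> e"
    using \<open>0 < e\<close> assms(1) by (auto simp: d_def min_def field_simps)
  then show "h \<le> 0 + e"
    using assms(2)[of d] by linarith
qed

lemma hline_eq_1_diff:
  "hline_eq 1 c2 z - hline_eq 1 c1 z = 2 * ((Re c1 - Re c2) * Re z + (Im c1 - Im c2) * Im z)"
  by (simp add: hline_eq_1 algebra_simps)

lemma hline_1_far_from_diameter:
  assumes "\<bar>Re c\<bar> \<le> 1" "1 < cmod c" "p \<in> hline 1 c"
  shows "sqrt (1 - (Re c)\<^sup>2) / hline_radius c \<le> 2 * \<bar>Im p\<bar> / (1 - (cmod p)\<^sup>2)"
proof -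
  define s \<rho> where "s = sqrt (1 - (Re c)\<^sup>2)" and "\<rho> = hline_radius c"
  have "cmod p < 1"
    using assms(3) by (simp add: hline_def)
  have "(cmod \<i>)\<^sup>2 - 0\<^sup>2 = 1"
    by simp
  then obtain x0 where "x0 \<in> hline 0 \<i>" and x0: "hdist p x0 = hdist_set p (hline 0 \<i>)"
    using hdist_set_hline_attained[of p 0 \<i>] \<open>cmod p < 1\<close> by auto
  then obtain x where x: "x0 = of_real x" "\<bar>x\<bar> < 1"
    using hline_0_eq_diameter[of 1] by auto
  have "0 < 1 - x\<^sup>2"
    using x(2) by (simp add: abs_square_less_1)
  then have "s * (1 - x\<^sup>2) / ((1 - x\<^sup>2) * \<rho>) \<le> \<bar>x\<^sup>2 - 2 * x * Re c + 1\<bar> / ((1 - x\<^sup>2) * \<rho>)"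
    using quadratic_ge_sqrt[OF assms(1), of x] hline_radius_pos[OF assms(2)]
    by (intro divide_right_mono) (simp_all add: s_def \<rho>_def)
  then have "s / \<rho> \<le> \<bar>x\<^sup>2 - 2 * x * Re c + 1\<bar> / ((1 - x\<^sup>2) * \<rho>)"
    using \<open>0 < 1 - x\<^sup>2\<close> by simp
  also have "\<dots> = sinh (hdist_set x0 (hline 1 c))"
    using x assms(2) by (simp add: hdist_set_hline_1_of_real \<rho>_def)
  also have "\<dots> \<le> sinh (hdist p x0)"
    using hdist_set_le[of x0 "hline 1 c" p] x assms(3) hline_subset_pdisk by (simp add: hdist_commute)
  also have "\<dots> = 2 * \<bar>Im p\<bar> / (1 - (cmod p)\<^sup>2)"
    using x0 \<open>cmod p < 1\<close> by (simp add: hdist_set_hline hline_eq_def abs_mult)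
  finally show ?thesis
    by (simp add: s_def \<rho>_def)
qed

lemma hdist_sets_hline_lower:
  assumes "Re c1 = Re c2" "\<bar>Re c1\<bar> \<le> 1" "1 < cmod c1" "1 < cmod c2"
    and "p \<in> hline 1 c1" "q \<in> hline 1 c2"
  shows "arsinh (sqrt (1 - (Re c1)\<^sup>2) * \<bar>Im c1 - Im c2\<bar> / (hline_radius c1 * hline_radius c2))
           \<le> hdist p q"
proof -
  define s \<rho>1 \<rho>2 where "s = sqrt (1 - (Re c1)\<^sup>2)" and "\<rho>1 = hline_radius c1" and "\<rho>2 = hline_radius c2"
  have p: "cmod p < 1" "hline_eq 1 c1 p = 0"
    using assms(5) by (simp_all add: hline_def)
  have "s * \<bar>Im c1 - Im c2\<bar> / (\<rho>1 * \<rho>2) = \<bar>Im c1 - Im c2\<bar> / \<rho>2 * (s / \<rho>1)"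
    by (simp add: mult_ac)
  also have "\<dots> \<le> \<bar>Im c1 - Im c2\<bar> / \<rho>2 * (2 * \<bar>Im p\<bar> / (1 - (cmod p)\<^sup>2))"
    using hline_1_far_from_diameter[OF assms(2,3,5)] hline_radius_pos[OF assms(4)]
    by (intro mult_left_mono) (simp_all add: s_def \<rho>1_def \<rho>2_def)
  also have "\<dots> = \<bar>hline_eq 1 c2 p\<bar> / ((1 - (cmod p)\<^sup>2) * \<rho>2)"
  proof -
    have "hline_eq 1 c2 p = 2 * ((Im c1 - Im c2) * Im p)"
      using hline_eq_1_diff[of c2 p c1] p(2) assms(1) by simp
    then have "\<bar>hline_eq 1 c2 p\<bar> = 2 * (\<bar>Im c1 - Im c2\<bar> * \<bar>Im p\<bar>)"
      by (simp only: abs_mult abs_numeral)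
    then show ?thesis
      by (simp add: mult_ac)
  qed
  also have "\<dots> = sinh (hdist_set p (hline 1 c2))"
    using p(1) assms(4) by (simp add: hdist_set_hline_1 \<rho>2_def)
  also have "\<dots> \<le> sinh (hdist p q)"
    using hdist_set_le[OF p(1) hline_subset_pdisk assms(6)] by simp
  finally show ?thesis
    unfolding s_def \<rho>1_def \<rho>2_def by (metis arsinh_mono arsinh_sinh_real)
qed

lemma hdist_sets_hline_le_real_point:
  assumes "Re c1 = Re c2" "1 < cmod c1" "1 < cmod c2" "\<bar>x\<bar> < 1"
  shows "hdist_sets (hline 1 c1) (hline 1 c2)
           \<le> arsinh (\<bar>x\<^sup>2 - 2 * x * Re c1 + 1\<bar> / ((1 - x\<^sup>2) * hline_radius c1))
             + arsinh (\<bar>x\<^sup>2 - 2 * x * Re c1 + 1\<bar> / ((1 - x\<^sup>2) * hline_radius c2))"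
  using hdist_sets_hline_le_add[of "of_real x" 1 c1 1 c2] hdist_set_hline_1_of_real assms by simp

text \<open>If \<^term>\<open>\<bar>Re c1\<bar> = 1\<close>, both circles pass through the boundary point \<^term>\<open>Re c1\<close>:
  the lines are asymptotic and the distance is an infimum that is not attained.\<close>

lemma hdist_sets_hline_tangent:
  assumes "Re c1 = Re c2" "\<bar>Re c1\<bar> = 1" "1 < cmod c1" "1 < cmod c2"
  shows "hdist_sets (hline 1 c1) (hline 1 c2) \<le> 0"
proof -
  define \<rho>1 \<rho>2 where "\<rho>1 = hline_radius c1" and "\<rho>2 = hline_radius c2"
  have \<rho>: "0 < \<rho>1" "0 < \<rho>2"
    using assms by (simp_all add: \<rho>1_def \<rho>2_def hline_radius_pos)
  have "hdist_sets (hline 1 c1) (hline 1 c2) \<le> d * (2 / \<rho>1 + 2 / \<rho>2)" if "0 < d" "d < 1" for d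
  proof -
    define x where "x = Re c1 * (1 - d)"
    have "\<bar>x\<bar> < 1" and k_le: "\<bar>x\<^sup>2 - 2 * x * Re c1 + 1\<bar> / (1 - x\<^sup>2) \<le> d"
      using quadratic_near_tangency[OF assms(2) that] by (simp_all add: x_def)
    have bound: "arsinh (\<bar>x\<^sup>2 - 2 * x * Re c1 + 1\<bar> / ((1 - x\<^sup>2) * \<rho>)) \<le> d * (2 / \<rho>)"
      if "0 < \<rho>" for \<rho>
    proof -
      have "\<bar>x\<^sup>2 - 2 * x * Re c1 + 1\<bar> / ((1 - x\<^sup>2) * \<rho>) \<le> d / \<rho>"
        using k_le that by (simp add: divide_right_mono flip: divide_divide_eq_left)
      then have "arsinh (\<bar>x\<^sup>2 - 2 * x * Re c1 + 1\<bar> / ((1 - x\<^sup>2) * \<rho>)) \<le> arsinh (d / \<rho>)"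
        by (rule arsinh_mono)
      also have "\<dots> \<le> 2 * (d / \<rho>)"
        using that \<open>0 < d\<close> by (intro arsinh_le_double) simp
      finally show ?thesis
        by (simp add: mult.commute)
    qed
    show ?thesis
      using hdist_sets_hline_le_real_point[OF assms(1,3,4) \<open>\<bar>x\<bar> < 1\<close>] bound[OF \<rho>(1)] bound[OF \<rho>(2)]
      unfolding distrib_left \<rho>1_def \<rho>2_def by linarith
  qed
  then show ?thesis
    using \<rho> by (intro le_0_if_le_small_multiples[of "2 / \<rho>1 + 2 / \<rho>2"]) (auto intro: add_pos_pos)
qed

lemma hdist_sets_hline_upper:
  assumes "Re c1 = Re c2" "\<bar>Re c1\<bar> \<le> 1" "1 < cmod c1" "1 < cmod c2"
  shows "hdist_sets (hline 1 c1) (hline 1 c2)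
           \<le> arsinh (sqrt (1 - (Re c1)\<^sup>2) / hline_radius c1) + arsinh (sqrt (1 - (Re c1)\<^sup>2) / hline_radius c2)"
proof (cases "\<bar>Re c1\<bar> < 1")
  case True
  define x where "x = Re c1 / (1 + sqrt (1 - (Re c1)\<^sup>2))"
  have "\<bar>x\<bar> < 1" "\<bar>x\<^sup>2 - 2 * x * Re c1 + 1\<bar> / (1 - x\<^sup>2) = sqrt (1 - (Re c1)\<^sup>2)"
    using quadratic_at_nearest_point[OF True] by (simp_all add: x_def)
  then show ?thesis
    using hdist_sets_hline_le_real_point[OF assms(1,3,4), of x] by (simp flip: divide_divide_eq_left)
next
  case False
  then have "\<bar>Re c1\<bar> = 1"
    using assms(2) by simp
  moreover from this have "(Re c1)\<^sup>2 = 1"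
    by (simp add: abs_square_eq_1)
  ultimately show ?thesis
    using hdist_sets_hline_tangent[OF assms(1) _ assms(3,4)] by simp
qed

lemma cosh_arsinh_eq_inversive_distance:
  assumes "Re c1 = Re c2" "\<bar>Re c1\<bar> \<le> 1" "Im c1 * Im c2 < 0" "1 < cmod c1" "1 < cmod c2"
  shows "cosh (arsinh (sqrt (1 - (Re c1)\<^sup>2) * \<bar>Im c1 - Im c2\<bar> / (hline_radius c1 * hline_radius c2)))
           = inversive_distance c1 (hline_radius c1) c2 (hline_radius c2)"
proof -
  define a b1 b2 \<rho>1 \<rho>2 where "a = Re c1" and "b1 = Im c1" and "b2 = Im c2"
    and "\<rho>1 = hline_radius c1" and "\<rho>2 = hline_radius c2"
  have \<rho>: "0 < \<rho>1" "0 < \<rho>2" "\<rho>1\<^sup>2 = a\<^sup>2 + b1\<^sup>2 - 1" "\<rho>2\<^sup>2 = a\<^sup>2 + b2\<^sup>2 - 1"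
    using assms hline_radius_pos hline_radius_sq by (simp_all add: a_def b1_def b2_def \<rho>1_def \<rho>2_def)
  have "a\<^sup>2 \<le> 1"
    using assms(2) by (simp add: a_def abs_square_le_1)
  define s P where "s = sqrt (1 - a\<^sup>2)" and "P = \<rho>1 * \<rho>2"
  have s: "s\<^sup>2 = 1 - a\<^sup>2"
    using \<open>a\<^sup>2 \<le> 1\<close> by (simp add: s_def)
  have "0 < P"
    using \<rho>(1,2) by (simp add: P_def)
  have "0 < 1 - a\<^sup>2 - b1 * b2"
    using \<open>a\<^sup>2 \<le> 1\<close> assms(3) by (simp add: b1_def b2_def)
  have "(cmod (c1 - c2))\<^sup>2 = (b1 - b2)\<^sup>2"
    using assms(1) by (simp add: cmod_power2 b1_def b2_def)
  then have "inversive_distance c1 \<rho>1 c2 \<rho>2 = ((b1 - b2)\<^sup>2 - \<rho>1\<^sup>2 - \<rho>2\<^sup>2) / (2 * \<rho>1 * \<rho>2)"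
    unfolding inversive_distance_def by (simp only:)
  also have "\<dots> = (1 - a\<^sup>2 - b1 * b2) / P"
    unfolding \<rho>(3,4) P_def using \<rho>(1,2)
    by (simp add: divide_simps) (simp add: power2_eq_square algebra_simps)
  finally have "inversive_distance c1 \<rho>1 c2 \<rho>2 = (1 - a\<^sup>2 - b1 * b2) / P" .
  moreover have "(s * \<bar>b1 - b2\<bar> / P)\<^sup>2 + 1 = ((1 - a\<^sup>2 - b1 * b2) / P)\<^sup>2"
  proof -
    have "(s * \<bar>b1 - b2\<bar> / P)\<^sup>2 + 1 = (s\<^sup>2 * (b1 - b2)\<^sup>2 + P\<^sup>2) / P\<^sup>2"
      using \<open>0 < P\<close> by (simp add: power_divide power_mult_distrib field_simps)
    also have "s\<^sup>2 * (b1 - b2)\<^sup>2 + P\<^sup>2 = (1 - a\<^sup>2 - b1 * b2)\<^sup>2"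
      unfolding P_def power_mult_distrib s \<rho>(3,4) by (simp add: power2_eq_square algebra_simps)
    finally show ?thesis
      by (simp add: power_divide)
  qed
  ultimately show ?thesis
    using \<open>0 < 1 - a\<^sup>2 - b1 * b2\<close> \<open>0 < P\<close>
    by (simp add: cosh_arsinh_real a_def b1_def b2_def \<rho>1_def \<rho>2_def s_def P_def)
qed

theorem cosh_hdist_sets_hline:
  assumes "Re c1 = Re c2" "\<bar>Re c1\<bar> \<le> 1" "Im c1 * Im c2 < 0" "1 < cmod c1" "1 < cmod c2"
  shows "cosh (hdist_sets (hline 1 c1) (hline 1 c2))
           = inversive_distance c1 (hline_radius c1) c2 (hline_radius c2)"
proof -
  define s \<rho>1 \<rho>2 where "s = sqrt (1 - (Re c1)\<^sup>2)"
    and "\<rho>1 = hline_radius c1" and "\<rho>2 = hline_radius c2"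
  have "hdist_sets (hline 1 c1) (hline 1 c2) = arsinh (s * \<bar>Im c1 - Im c2\<bar> / (\<rho>1 * \<rho>2))"
  proof (rule antisym)
    have "(Re c1)\<^sup>2 \<le> 1"
      using assms(2) by (simp add: abs_square_le_1)
    then have "s\<^sup>2 + \<rho>1\<^sup>2 = (Im c1)\<^sup>2" "s\<^sup>2 + \<rho>2\<^sup>2 = (Im c2)\<^sup>2"
      using assms hline_radius_sq by (simp_all add: s_def \<rho>1_def \<rho>2_def)
    then have "arsinh (s / \<rho>1) + arsinh (s / \<rho>2) = arsinh (s * \<bar>Im c1 - Im c2\<bar> / (\<rho>1 * \<rho>2))"
      using assms hline_radius_pos by (intro arsinh_add_arsinh) (simp_all add: s_def \<rho>1_def \<rho>2_def abs_square_le_1)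
    then show "hdist_sets (hline 1 c1) (hline 1 c2) \<le> arsinh (s * \<bar>Im c1 - Im c2\<bar> / (\<rho>1 * \<rho>2))"
      using hdist_sets_hline_upper[OF assms(1,2,4,5)] by (simp add: s_def \<rho>1_def \<rho>2_def)
  next
    obtain p1 p2 where "p1 \<in> hline 1 c1" "p2 \<in> hline 1 c2"
      using hline_1_nonempty assms(4,5) by metis
    then show "arsinh (s * \<bar>Im c1 - Im c2\<bar> / (\<rho>1 * \<rho>2)) \<le> hdist_sets (hline 1 c1) (hline 1 c2)"
      using hdist_sets_hline_lower[OF assms(1,2,4,5)]
      by (intro hdist_sets_greatest) (auto simp: s_def \<rho>1_def \<rho>2_def)
  qed
  then show ?thesis
    using cosh_arsinh_eq_inversive_distance[OF assms] by (simp add: s_def \<rho>1_def \<rho>2_def)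
qed

section \<open>The weighted bisector\<close>

lemma abs_quadratic_eq_cases:
  fixes x a1 a2 :: real
  assumes "x \<noteq> 0" "\<bar>x\<^sup>2 - 2 * x * a1 + 1\<bar> = \<bar>x\<^sup>2 - 2 * x * a2 + 1\<bar>"
  shows "a1 = a2 \<or> a1 + a2 = x + 1 / x"
proof -
  consider "x\<^sup>2 - 2 * x * a1 + 1 = x\<^sup>2 - 2 * x * a2 + 1"
    | "x\<^sup>2 - 2 * x * a1 + 1 = - (x\<^sup>2 - 2 * x * a2 + 1)"
    using assms(2) abs_eq_iff by blast
  then show ?thesis
  proof cases
    case 1
    then show ?thesis
      using assms(1) by simp
  next
    case 2
    then have "x * (a1 + a2) = x\<^sup>2 + 1"
      by (simp add: algebra_simps)
    then show ?thesis
      using assms(1) by (simp add: field_simps power2_eq_square)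
  qed
qed

lemma quadratic_root_in_unit_interval:
  fixes a :: real
  assumes "1 < \<bar>a\<bar>"
  obtains x where "\<bar>x\<bar> < 1" "x\<^sup>2 - 2 * x * a + 1 = 0"
proof -
  define s where "s = sqrt (a\<^sup>2 - 1)"
  have "1 \<le> a\<^sup>2"
    using assms abs_square_less_1[of a] by linarith
  then have s: "0 \<le> s" "s\<^sup>2 = a\<^sup>2 - 1"
    by (simp_all add: s_def)
  have "s < \<bar>a\<bar>"
    using s power2_less_imp_less[of s "\<bar>a\<bar>"] by simp
  moreover have "\<bar>a\<bar> - 1 < s"
    using s assms power2_less_imp_less[of "\<bar>a\<bar> - 1" s] by (simp add: power2_eq_square algebra_simps)
  ultimately have "\<bar>sgn a * (\<bar>a\<bar> - s)\<bar> < 1"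
    by (simp add: abs_mult)
  moreover have "(sgn a * (\<bar>a\<bar> - s))\<^sup>2 - 2 * (sgn a * (\<bar>a\<bar> - s)) * a + 1 = 0"
    using s assms by (cases "0 < a") (simp_all add: power2_eq_square algebra_simps)
  ultimately show ?thesis
    using that by blast
qed

lemma hline_eq_1_add: "hline_eq 1 c1 z + hline_eq 1 c2 z = 2 * hline_eq 1 ((c1 + c2) / 2) z"
  by (simp add: hline_eq_1 field_simps)

lemma hline_side:
  assumes "\<bar>Re c\<bar> \<le> 1" "z \<in> hline 1 c"
  shows "0 < Im c * Im z"
proof -
  have "cmod z < 1" and eq: "(cmod z)\<^sup>2 - 2 * (Re c * Re z + Im c * Im z) + 1 = 0"
    using assms(2) by (simp_all add: hline_def hline_eq_1)
  then have "\<bar>Re z\<bar> < 1"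
    using abs_Re_le_cmod le_less_trans by blast
  then have "0 < (1 - \<bar>Re z\<bar>)\<^sup>2"
    by simp
  moreover have "(1 - \<bar>Re z\<bar>)\<^sup>2 = (Re z)\<^sup>2 - 2 * \<bar>Re z\<bar> + 1"
    by (simp add: power2_eq_square algebra_simps)
  moreover have "Re c * Re z \<le> \<bar>Re z\<bar>"
    using assms(1) abs_mult[of "Re c" "Re z"] mult_left_le_one_le[of "\<bar>Re z\<bar>" "\<bar>Re c\<bar>"] by linarith
  ultimately show ?thesis
    using eq cmod_power2[of z] zero_le_power2[of "Im z"] by (smt (verit))
qed

text \<open>The weighted bisector of two lines is the locus where \<^term>\<open>r1\<close> and \<^term>\<open>r2\<close> times the
  sinh of the distances to them agree; the locale fixes the normalised configuration in which it
  is the real diameter.\<close>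

locale real_diameter_locus =
  fixes r1 r2 :: real and c1 c2 :: complex
  assumes r_pos: "0 < r1" "0 < r2"
    and norm_gt_1: "1 < cmod c1" "1 < cmod c2"
    and disjoint: "hline 1 c1 \<inter> hline 1 c2 = {}"
    and locus_iff: "\<And>q. cmod q < 1 \<Longrightarrow>
      r1 * sinh (hdist_set q (hline 1 c1)) = r2 * sinh (hdist_set q (hline 1 c2)) \<longleftrightarrow> Im q = 0"
begin

lemma scaled_locus_iff:
  assumes "cmod q < 1"
  shows "r1 / hline_radius c1 * \<bar>hline_eq 1 c1 q\<bar> = r2 / hline_radius c2 * \<bar>hline_eq 1 c2 q\<bar>
           \<longleftrightarrow> Im q = 0"
proof -
  define D where "D = 1 - (cmod q)\<^sup>2"
  have "D \<noteq> 0"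
    using norm_lt_1_imp_sq_lt_1[OF assms] by (simp add: D_def)
  then have cancel: "x / D = y / D \<longleftrightarrow> x = y" for x y
    by (simp only: divide_cancel_right) simp
  have sinh_dist: "r * sinh (hdist_set q (hline 1 c)) = (r / hline_radius c * \<bar>hline_eq 1 c q\<bar>) / D"
    if "1 < cmod c" for r c
    using assms that by (simp add: hdist_set_hline_1 D_def mult_ac)
  show ?thesis
    using locus_iff[OF assms] unfolding sinh_dist[OF norm_gt_1(1)] sinh_dist[OF norm_gt_1(2)] cancel .
qed

lemma radius_ratio: "r1 / hline_radius c1 = r2 / hline_radius c2"
  using scaled_locus_iff[of 0] by (simp add: hline_eq_def)

lemma abs_hline_eq_iff:
  assumes "cmod q < 1"
  shows "\<bar>hline_eq 1 c1 q\<bar> = \<bar>hline_eq 1 c2 q\<bar> \<longleftrightarrow> Im q = 0"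
proof -
  have "0 < r2" "0 < hline_radius c2"
    using r_pos norm_gt_1 hline_radius_pos by simp_all
  then show ?thesis
    using scaled_locus_iff[OF assms] unfolding radius_ratio by simp
qed

lemma Re_eq: "Re c1 = Re c2"
proof -
  have "Re c1 = Re c2 \<or> Re c1 + Re c2 = x + 1 / x" if "0 < x" "x < 1" for x :: real
  proof (rule abs_quadratic_eq_cases)
    show "\<bar>x\<^sup>2 - 2 * x * Re c1 + 1\<bar> = \<bar>x\<^sup>2 - 2 * x * Re c2 + 1\<bar>"
      using abs_hline_eq_iff[of "of_real x"] that by (simp add: hline_eq_1_of_real)
  qed (use that in simp)
  from this[of "1 / 2"] this[of "1 / 3"] show ?thesis
    by auto
qed

lemma abs_Re_le_1: "\<bar>Re c1\<bar> \<le> 1"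
proof (rule ccontr)
  assume "\<not> \<bar>Re c1\<bar> \<le> 1"
  then have "1 < \<bar>Re c1\<bar>"
    by simp
  then obtain x where "\<bar>x\<bar> < 1" "x\<^sup>2 - 2 * x * Re c1 + 1 = 0"
    by (rule quadratic_root_in_unit_interval)
  then have "of_real x \<in> hline 1 c1" "of_real x \<in> hline 1 c2"
    using Re_eq by (simp_all add: hline_def hline_eq_1_of_real)
  then show False
    using disjoint by blast
qed

text \<open>Otherwise the hyperbolic line with centre \<^term>\<open>(c1 + c2) / 2\<close>, on which
  \<^term>\<open>hline_eq 1 c1 = - hline_eq 1 c2\<close>, would meet the disk off the real diameter.\<close>

lemma Im_mult_Im_neg: "Im c1 * Im c2 < 0"
proof (rule ccontr)
  assume "\<not> Im c1 * Im c2 < 0"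
  define t m where "t = 1 - (Re c1)\<^sup>2" and "m = (c1 + c2) / 2"
  have "0 \<le> t"
    using abs_Re_le_1 by (simp add: t_def abs_square_le_1)
  have "1 < (cmod c1)\<^sup>2" "1 < (cmod c2)\<^sup>2"
    using norm_gt_1 one_less_power[of "cmod c1" 2] one_less_power[of "cmod c2" 2] by simp_all
  moreover have "(Re c2)\<^sup>2 = (Re c1)\<^sup>2"
    using Re_eq by simp
  ultimately have "t < (Im c1)\<^sup>2" "t < (Im c2)\<^sup>2"
    unfolding cmod_power2 t_def by linarith+
  then have "sqrt t < \<bar>Im c1\<bar>" "sqrt t < \<bar>Im c2\<bar>"
    using real_sqrt_less_mono[of t "(Im c1)\<^sup>2"] real_sqrt_less_mono[of t "(Im c2)\<^sup>2"] by simp_all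
  moreover have "0 \<le> sqrt t"
    using \<open>0 \<le> t\<close> by simp
  ultimately have "sqrt t * sqrt t < \<bar>Im c1\<bar> * \<bar>Im c2\<bar>"
    by (intro mult_strict_mono) auto
  then have "t < Im c1 * Im c2"
    using \<open>0 \<le> t\<close> \<open>\<not> Im c1 * Im c2 < 0\<close> by (simp add: abs_mult[symmetric])
  moreover have "4 * (cmod m)\<^sup>2 = 4 * (Re c1)\<^sup>2 + (Im c1)\<^sup>2 + 2 * (Im c1 * Im c2) + (Im c2)\<^sup>2"
    using Re_eq unfolding cmod_power2 by (simp add: m_def power2_eq_square field_simps)
  ultimately have "1 < (cmod m)\<^sup>2"
    using \<open>t < (Im c1)\<^sup>2\<close> \<open>t < (Im c2)\<^sup>2\<close> t_def by linarith
  then have "1 < cmod m"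
    using power2_less_imp_less[of 1 "cmod m"] by simp
  then obtain p where p: "p \<in> hline 1 m"
    by (rule hline_1_nonempty)
  then have "cmod p < 1" "hline_eq 1 m p = 0"
    by (simp_all add: hline_def)
  have "\<bar>Re m\<bar> \<le> 1"
    using abs_Re_le_1 Re_eq by (simp add: m_def)
  then have "Im p \<noteq> 0"
    using hline_side[OF _ p] by auto
  moreover have "hline_eq 1 c1 p = - hline_eq 1 c2 p"
    using hline_eq_1_add[of c1 p c2] \<open>hline_eq 1 m p = 0\<close> by (simp add: m_def)
  then have "Im p = 0"
    using abs_hline_eq_iff[OF \<open>cmod p < 1\<close>] by simp
  ultimately show False
    by simp
qed

theorem cosh_hdist_sets:
  "cosh (hdist_sets (hline 1 c1) (hline 1 c2)) = inversive_distance c1 (hline_radius c1) c2 (hline_radius c2)"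
  using Re_eq abs_Re_le_1 Im_mult_Im_neg norm_gt_1 by (intro cosh_hdist_sets_hline) simp_all

end

lemma real_diameter_locus_rotate:
  assumes u: "cmod u = 1" and "0 < r1" "0 < r2" "1 < cmod c1" "1 < cmod c2"
    and disjoint: "hline 1 c1 \<inter> hline 1 c2 = {}"
    and locus: "{q \<in> pdisk. r1 * sinh (hdist_set q (hline 1 c1)) = r2 * sinh (hdist_set q (hline 1 c2))}
                = {complex_of_real t * u | t. \<bar>t\<bar> < 1}"
  shows "real_diameter_locus r1 r2 (cnj u * c1) (cnj u * c2)"
proof
  show "0 < r1" "0 < r2"
    by (fact assms)+
  show "1 < cmod (cnj u * c1)" "1 < cmod (cnj u * c2)"
    using assms by (simp_all add: norm_mult)
  show "hline 1 (cnj u * c1) \<inter> hline 1 (cnj u * c2) = {}"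
    using disjoint unfolding hline_rotate[OF u, of 1 c1] hline_rotate[OF u, of 1 c2] by blast
next
  fix q
  assume q: "cmod q < 1"
  have "u \<noteq> 0"
    using u by auto
  have "u * q \<in> {complex_of_real t * u | t. \<bar>t\<bar> < 1} \<longleftrightarrow> Im q = 0"
  proof
    assume "u * q \<in> {complex_of_real t * u | t. \<bar>t\<bar> < 1}"
    then obtain t where "u * q = of_real t * u"
      by blast
    then have "q = of_real t"
      using \<open>u \<noteq> 0\<close> by (simp add: mult.commute)
    then show "Im q = 0"
      by simp
  next
    assume "Im q = 0"
    then have "u * q = of_real (Re q) * u" "\<bar>Re q\<bar> < 1"
      using q abs_Re_le_cmod[of q] by (simp_all add: complex_eq_iff)
    then show "u * q \<in> {complex_of_real t * u | t. \<bar>t\<bar> < 1}"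
      by blast
  qed
  moreover have "u * q \<in> {q \<in> pdisk. r1 * sinh (hdist_set q (hline 1 c1)) = r2 * sinh (hdist_set q (hline 1 c2))}
      \<longleftrightarrow> r1 * sinh (hdist_set q (hline 1 (cnj u * c1))) = r2 * sinh (hdist_set q (hline 1 (cnj u * c2)))"
    using q u assms(4,5) by (simp add: pdisk_def norm_mult hdist_set_hline_rotate)
  ultimately show "r1 * sinh (hdist_set q (hline 1 (cnj u * c1))) = r2 * sinh (hdist_set q (hline 1 (cnj u * c2)))
      \<longleftrightarrow> Im q = 0"
    unfolding locus by blast
qed

theorem hline_weighted_bisector_diameter:
  assumes u: "cmod u = 1" and "0 < r1" "0 < r2" "1 < cmod c1" "1 < cmod c2"
    and "hline 1 c1 \<inter> hline 1 c2 = {}"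
    and "{q \<in> pdisk. r1 * sinh (hdist_set q (hline 1 c1)) = r2 * sinh (hdist_set q (hline 1 c2))}
                = {complex_of_real t * u | t. \<bar>t\<bar> < 1}"
  shows "hline_radius c1 / hline_radius c2 = r1 / r2"
    and "cosh (hdist_sets (hline 1 c1) (hline 1 c2))
           = inversive_distance c1 (hline_radius c1) c2 (hline_radius c2)"
proof -
  interpret real_diameter_locus r1 r2 "cnj u * c1" "cnj u * c2"
    by (rule real_diameter_locus_rotate[OF assms])
  have radius: "hline_radius (cnj u * c) = hline_radius c" for c
    using u by (simp add: hline_radius_def norm_mult)
  show "hline_radius c1 / hline_radius c2 = r1 / r2"
    using radius_ratio[unfolded radius] assms(2-5) hline_radius_pos[of c1] hline_radius_pos[of c2]
    by (simp add: field_simps)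
  have "hdist_sets (hline 1 c1) (hline 1 c2) = hdist_sets (hline 1 (cnj u * c1)) (hline 1 (cnj u * c2))"
    unfolding hline_rotate[OF u, of 1 c1] hline_rotate[OF u, of 1 c2] by (rule hdist_sets_rotate[OF u])
  moreover have "inversive_distance (cnj u * c1) \<rho>1 (cnj u * c2) \<rho>2 = inversive_distance c1 \<rho>1 c2 \<rho>2"
    for \<rho>1 \<rho>2
    using u by (simp add: inversive_distance_def norm_mult flip: right_diff_distrib)
  ultimately show "cosh (hdist_sets (hline 1 c1) (hline 1 c2))
      = inversive_distance c1 (hline_radius c1) c2 (hline_radius c2)"
    using cosh_hdist_sets by (simp add: radius)
qed

lemma hgeodesic_avoids_0_if_balanced:
  assumes "0 < r2" "hgeodesic \<gamma>1" "hgeodesic \<gamma>2" "\<gamma>1 \<inter> \<gamma>2 = {}"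
    and "r1 * sinh (hdist_set 0 \<gamma>1) = r2 * sinh (hdist_set 0 \<gamma>2)"
  shows "0 \<notin> \<gamma>1"
proof
  assume "0 \<in> \<gamma>1"
  then have "hdist_set 0 \<gamma>1 = 0"
    using hdist_set_hgeodesic_eq_0_iff[OF assms(2)] by simp
  then have "hdist_set 0 \<gamma>2 = 0"
    using assms(1,5) by simp
  then have "0 \<in> \<gamma>2"
    using hdist_set_hgeodesic_eq_0_iff[OF assms(3)] by simp
  then show False
    using \<open>0 \<in> \<gamma>1\<close> assms(4) by blast
qed

theorem lemma4p8:
  fixes r1 r2 :: real and \<gamma>1 \<gamma>2 :: "complex set"
  assumes "r1 > 0" and "r2 > 0"
    and "hgeodesic \<gamma>1" and "hgeodesic \<gamma>2" and "\<gamma>1 \<inter> \<gamma>2 = {}"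
    and "diameter_of_disk
           {q \<in> pdisk. r1 * sinh (hdist_set q \<gamma>1) = r2 * sinh (hdist_set q \<gamma>2)}"
  shows "\<exists>c1 c2 :: complex. \<exists>\<rho>1 \<rho>2 :: real. \<rho>1 > 0 \<and> \<rho>2 > 0 \<and>
           \<gamma>1 \<subseteq> sphere c1 \<rho>1 \<and> \<gamma>2 \<subseteq> sphere c2 \<rho>2 \<and>
           \<rho>1 / \<rho>2 = r1 / r2 \<and>
           inversive_distance c1 \<rho>1 c2 \<rho>2 = cosh (hdist_sets \<gamma>1 \<gamma>2)"
proof -
  obtain u where u: "cmod u = 1" and locus:
    "{q \<in> pdisk. r1 * sinh (hdist_set q \<gamma>1) = r2 * sinh (hdist_set q \<gamma>2)}
       = {complex_of_real t * u | t. \<bar>t\<bar> < 1}"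
    using assms(6) unfolding diameter_of_disk_def by blast
  have "0 \<in> {complex_of_real t * u | t. \<bar>t\<bar> < 1}"
    by (rule CollectI, rule exI[of _ 0]) simp
  then have "r1 * sinh (hdist_set 0 \<gamma>1) = r2 * sinh (hdist_set 0 \<gamma>2)"
    unfolding locus[symmetric] by simp
  then have "0 \<notin> \<gamma>1" "0 \<notin> \<gamma>2"
    using assms(1-5) hgeodesic_avoids_0_if_balanced[of r2 \<gamma>1 \<gamma>2 r1]
      hgeodesic_avoids_0_if_balanced[of r1 \<gamma>2 \<gamma>1 r2]
    by (auto simp: Int_commute)
  then obtain c1 c2 where c: "1 < cmod c1" "\<gamma>1 = hline 1 c1" "1 < cmod c2" "\<gamma>2 = hline 1 c2"
    using hgeodesic_avoiding_0 assms(3,4) by metis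
  note bisector = hline_weighted_bisector_diameter[OF u assms(1,2) c(1,3),
      OF assms(5)[unfolded c(2,4)] locus[unfolded c(2,4)]]
  have "hline_radius c1 / hline_radius c2 = r1 / r2"
    "inversive_distance c1 (hline_radius c1) c2 (hline_radius c2) = cosh (hdist_sets \<gamma>1 \<gamma>2)"
    using bisector c(2,4) by simp_all
  moreover have "\<gamma>1 \<subseteq> sphere c1 (hline_radius c1)" "\<gamma>2 \<subseteq> sphere c2 (hline_radius c2)"
    "0 < hline_radius c1" "0 < hline_radius c2"
    using c hline_1_subset_sphere hline_radius_pos by simp_all
  ultimately show ?thesis
    by blast
qed

end
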